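(* Let $\mu>0$ and $\rho>0$, and let $x\in\mathbb{R}^n$ satisfy $c_i(x)>0$ for all $i=1,\dots,m$. Then $s\mapsto F(x,s;\mu,\rho)$ attains its maximum over $\mathbb{R}^m$ uniquely at $s_i=\mu/c_i(x)$, $i=1,\dots,m$, and $$\max_{s\in\mathbb{R}^m}F(x,s;\mu,\rho)=f(x)-\mu\sum_{i=1}^m\ln c_i(x).$$ Consequently, restricted to points with $c(x)>0$, the minimax problem $\min_x\max_s F(x,s;\mu,\rho)$ reduces to the logarithmic-barrier problem $\min_x f(x)-\mu\sum_{i=1}^m\ln c_i(x)$.
   Context: Let $f:\mathbb{R}^n\to\mathbb{R}$ and $c=(c_1,\dots,c_m):\mathbb{R}^n\to\mathbb{R}^m$ be twice continuously differentiable. For parameters $\mu>0$, $\rho>0$ and variables $x\in\mathbb{R}^n$, $s\in\mathbb{R}^m$, define for $i=1,\dots,m$: $z_i(x,s;\mu,\rho)=\frac{1}{2\rho}\big(\sqrt{(s_i-\rho c_i(x))^2+4\rho\mu}-(s_i-\rho c_i(x))\big)$, $y_i(x,s;\mu,\rho)=\frac{1}{2\rho}\big(\sqrt{(s_i-\rho c_i(x))^2+4\rho\mu}+(s_i-\rho c_i(x))\big)$, $h_i(x,s;\mu,\rho)=-\mu\ln z_i(x,s;\mu,\rho)+\frac{\rho}{2}y_i(x,s;\mu,\rho)^2-\frac{1}{2\rho}s_i^2$, and the augmented Lagrangian $F(x,s;\mu,\rho)=f(x)+\sum_{i=1}^m h_i(x,s;\mu,\rho)$. *)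

theory Defs
  imports "HOL-Analysis.Analysis"
begin

text \<open>Constraint index set is the finite type 'm (m = CARD('m)); variables x live in real^'n.
  c i x is the i-th constraint value c_i(x).\<close>

definition zfun :: "real \<Rightarrow> real \<Rightarrow> real \<Rightarrow> real \<Rightarrow> real" where
  "zfun mu rho ci si = (sqrt ((si - rho * ci)^2 + 4 * rho * mu) - (si - rho * ci)) / (2 * rho)"

definition yfun :: "real \<Rightarrow> real \<Rightarrow> real \<Rightarrow> real \<Rightarrow> real" where
  "yfun mu rho ci si = (sqrt ((si - rho * ci)^2 + 4 * rho * mu) + (si - rho * ci)) / (2 * rho)"

definition hfun :: "real \<Rightarrow> real \<Rightarrow> real \<Rightarrow> real \<Rightarrow> real" where
  "hfun mu rho ci si = - mu * ln (zfun mu rho ci si) + rho / 2 * (yfun mu rho ci si)^2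
      - si^2 / (2 * rho)"

definition AL :: "(real^'n \<Rightarrow> real) \<Rightarrow> ('m::finite \<Rightarrow> real^'n \<Rightarrow> real)
      \<Rightarrow> real^'n \<Rightarrow> real^'m \<Rightarrow> real \<Rightarrow> real \<Rightarrow> real" where
  "AL f c x s mu rho = f x + (\<Sum>i\<in>UNIV. hfun mu rho (c i x) (s $ i))"

end

theory Submission
  imports Defs
begin

text \<open>Write \<open>z = zfun \<mu> \<rho> c s\<close>. Since \<open>z y = \<mu>/\<rho>\<close> and \<open>\<rho> (y - z) = s - \<rho> c\<close>, the multiplier
  is recovered as \<open>s = \<rho> c + \<mu>/z - \<rho> z\<close>, and eliminating \<open>s\<close> and \<open>y\<close> gives
  \<open>-\<mu> ln c - h = \<mu> (c/z - 1 - ln (c/z)) + \<rho> (c - z)\<^sup>2 / 2\<close>. Both terms are nonnegative and vanish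
  only for \<open>z = c\<close>, i.e. for \<open>s = \<mu>/c\<close>.\<close>

lemma zfun_pos:
  assumes "mu > 0" and "rho > 0"
  shows "zfun mu rho c s > 0"
proof -
  have "sqrt ((s - rho * c)^2) < sqrt ((s - rho * c)^2 + 4 * rho * mu)"
    using assms by (intro real_sqrt_less_mono) simp
  then have "s - rho * c < sqrt ((s - rho * c)^2 + 4 * rho * mu)" by simp
  then show ?thesis unfolding zfun_def using assms by simp
qed

lemma zfun_mult_yfun:
  assumes "mu > 0" and "rho > 0"
  shows "zfun mu rho c s * yfun mu rho c s = mu / rho"
proof -
  have "(sqrt ((s - rho * c)^2 + 4 * rho * mu))^2 = (s - rho * c)^2 + 4 * rho * mu"
    using assms by (intro real_sqrt_pow2) (simp add: add_nonneg_nonneg)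
  then show ?thesis unfolding zfun_def yfun_def using assms
    by (simp add: field_simps power2_eq_square)
qed

lemma yfun_minus_zfun:
  assumes "rho > 0"
  shows "rho * (yfun mu rho c s - zfun mu rho c s) = s - rho * c"
  unfolding zfun_def yfun_def using assms by (simp add: field_simps)

lemma zfun_inverse:
  fixes mu rho c s :: real
  assumes "mu > 0" and "rho > 0"
  defines "z \<equiv> zfun mu rho c s"
  shows "s = rho * c + mu / z - rho * z"
proof -
  have "yfun mu rho c s = mu / (rho * z)"
    using zfun_mult_yfun[of mu rho c s, OF assms(1,2)] zfun_pos[of mu rho c s, OF assms(1,2)]
      assms(2)
    unfolding z_def by (simp add: field_simps)
  then show ?thesis using yfun_minus_zfun[of rho mu c s, OF assms(2)] assms(2)
    unfolding z_def by (simp add: field_simps)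
qed

lemma hfun_eq_zfun:
  fixes mu rho c s :: real
  assumes "mu > 0" and "rho > 0"
  defines "z \<equiv> zfun mu rho c s"
  shows "hfun mu rho c s = - mu * ln z - rho * (c - z)^2 / 2 - c * mu / z + mu"
proof -
  have z: "z > 0" unfolding z_def using zfun_pos[OF assms(1,2)] .
  have y: "yfun mu rho c s = mu / (rho * z)"
    using zfun_mult_yfun[of mu rho c s, OF assms(1,2)] z assms(2) unfolding z_def
    by (simp add: field_simps)
  have s: "s = rho * c + mu / z - rho * z" unfolding z_def by (rule zfun_inverse[OF assms(1,2)])
  have "hfun mu rho c s = - mu * ln z + rho / 2 * (mu / (rho * z))^2
      - (rho * c + mu / z - rho * z)^2 / (2 * rho)"
    unfolding hfun_def y z_def[symmetric] by (subst s) simp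
  also have "\<dots> = - mu * ln z - rho * (c - z)^2 / 2 - c * mu / z + mu"
    using assms(2) z by (simp add: field_simps power2_eq_square)
  finally show ?thesis .
qed

lemma hfun_le_barrier_minus_gap:
  fixes mu rho c s :: real
  assumes "mu > 0" and "rho > 0" and "c > 0"
  defines "z \<equiv> zfun mu rho c s"
  shows "hfun mu rho c s \<le> - mu * ln c - rho * (c - z)^2 / 2"
proof -
  have z: "z > 0" unfolding z_def using zfun_pos[OF assms(1,2)] .
  have "ln c - ln z \<le> c / z - 1"
    using ln_le_minus_one[of "c / z"] z assms(3) by (simp add: ln_div)
  then have "mu * (ln c - ln z) \<le> mu * (c / z - 1)"
    using assms(1) by (simp add: mult_left_mono)
  then show ?thesis
    unfolding hfun_eq_zfun[OF assms(1,2)] z_def[symmetric] by (simp add: algebra_simps)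
qed

lemma hfun_le_barrier:
  assumes "mu > 0" and "rho > 0" and "c > 0"
  shows "hfun mu rho c s \<le> - mu * ln c"
  using hfun_le_barrier_minus_gap[where c = c and s = s, OF assms] assms(2)
  by (smt (verit) divide_nonneg_pos mult_nonneg_nonneg zero_le_power2)

lemma hfun_eq_barrier_imp:
  assumes "mu > 0" and "rho > 0" and "c > 0"
    and "hfun mu rho c s = - mu * ln c"
  shows "s = mu / c"
proof -
  have "rho * (c - zfun mu rho c s)^2 / 2 \<le> 0"
    using hfun_le_barrier_minus_gap[where c = c and s = s, OF assms(1-3)] assms(4) by simp
  then have z: "zfun mu rho c s = c"
    using assms(2) by (simp add: divide_le_0_iff zero_le_mult_iff mult_le_0_iff)
  show ?thesis using zfun_inverse[where c = c and s = s, OF assms(1,2)] unfolding z by simp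
qed

lemma zfun_barrier:
  assumes "mu > 0" and "rho > 0" and "c > 0"
  shows "zfun mu rho c (mu / c) = c"
proof -
  have "(mu / c - rho * c)^2 + 4 * rho * mu = (mu / c + rho * c)^2"
    using assms(3) by (simp add: power2_eq_square field_simps)
  moreover have "mu / c + rho * c \<ge> 0" using assms by simp
  ultimately show ?thesis unfolding zfun_def using assms(2) by simp
qed

lemma hfun_barrier:
  assumes "mu > 0" and "rho > 0" and "c > 0"
  shows "hfun mu rho c (mu / c) = - mu * ln c"
  using hfun_eq_zfun[where c = c and s = "mu / c", OF assms(1,2)] zfun_barrier[OF assms] assms(3)
  by simp

lemma AL_barrier:
  assumes "mu > 0" and "rho > 0" and "\<forall>i. c i x > 0"
  shows "AL f c x (\<chi> i. mu / c i x) mu rho = f x - mu * (\<Sum>i\<in>UNIV. ln (c i x))"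
  unfolding AL_def using hfun_barrier[OF assms(1,2)] assms(3)
  by (simp add: sum_distrib_left sum_negf)

lemma AL_le_barrier:
  assumes "mu > 0" and "rho > 0" and "\<forall>i. c i x > 0"
  shows "AL f c x s mu rho \<le> f x - mu * (\<Sum>i\<in>UNIV. ln (c i x))"
proof -
  have "(\<Sum>i\<in>UNIV. hfun mu rho (c i x) (s $ i)) \<le> (\<Sum>i\<in>UNIV. - mu * ln (c i x))"
    using hfun_le_barrier[OF assms(1,2)] assms(3) by (intro sum_mono) auto
  then show ?thesis unfolding AL_def by (simp add: sum_distrib_left sum_negf)
qed

lemma AL_eq_barrier_imp:
  assumes "mu > 0" and "rho > 0" and "\<forall>i. c i x > 0"
    and "AL f c x s mu rho = f x - mu * (\<Sum>i\<in>UNIV. ln (c i x))"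
  shows "s = (\<chi> i. mu / c i x)"
proof -
  have "(\<Sum>i\<in>UNIV. hfun mu rho (c i x) (s $ i)) = (\<Sum>i\<in>UNIV. - mu * ln (c i x))"
    using assms(4) unfolding AL_def by (simp add: sum_distrib_left sum_negf)
  then have "hfun mu rho (c i x) (s $ i) = - mu * ln (c i x)" for i
    by (rule sum_mono_inv) (use hfun_le_barrier[OF assms(1,2)] assms(3) in simp_all)
  then have "s $ i = mu / c i x" for i
    by (intro hfun_eq_barrier_imp[OF assms(1,2)]) (simp_all add: assms(3))
  then show ?thesis by (simp add: vec_eq_iff)
qed

theorem theorem3p2:
  fixes f :: "real^'n \<Rightarrow> real"
    and c :: "'m::finite \<Rightarrow> real^'n \<Rightarrow> real"
    and x :: "real^'n" and mu rho :: real
  assumes "mu > 0" and "rho > 0"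
    and "\<forall>i. c i x > 0"
  shows "(\<forall>s. AL f c x s mu rho \<le> AL f c x (\<chi> i. mu / c i x) mu rho)
       \<and> (\<forall>s. AL f c x s mu rho = AL f c x (\<chi> i. mu / c i x) mu rho
               \<longrightarrow> s = (\<chi> i. mu / c i x))
       \<and> AL f c x (\<chi> i. mu / c i x) mu rho = f x - mu * (\<Sum>i\<in>UNIV. ln (c i x))
       \<and> (SUP s. AL f c x s mu rho) = f x - mu * (\<Sum>i\<in>UNIV. ln (c i x))"
proof -
  note max_value = AL_barrier[of mu rho c x f, OF assms]
  note upper = AL_le_barrier[of mu rho c x f, OF assms]
  note unique = AL_eq_barrier_imp[of mu rho c x f, OF assms]
  have "(SUP s. AL f c x s mu rho) = f x - mu * (\<Sum>i\<in>UNIV. ln (c i x))"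
  proof (rule cSup_eq_maximum)
    show "f x - mu * (\<Sum>i\<in>UNIV. ln (c i x)) \<in> range (\<lambda>s. AL f c x s mu rho)"
      using max_value by (metis rangeI)
  qed (use upper in blast)
  then show ?thesis unfolding max_value using upper unique by blast
qed

end
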